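(* Let $n,r,m,d,p$ be positive integers and $T>0$. Let $\mathbf{J}\in\mathbb{R}^{n\times n}$ be skew-symmetric, $\mathbf{R}\in\mathbb{R}^{n\times n}$ symmetric positive semi-definite, $\mathbf{B}\in\mathbb{R}^{n\times m}$, $\mathbf{u}:[0,T]\to\mathbb{R}^m$ an input, and let the Hamiltonian be $H(\mathbf{x})=\tfrac12\mathbf{x}^\intercal\mathbf{Q}\mathbf{x}+\mathbf{c}^\intercal\mathbf{h}(\mathbf{x})$ with $\mathbf{Q}\in\mathbb{R}^{n\times n}$, $\mathbf{c}\in\mathbb{R}^d$ and a continuously differentiable $\mathbf{h}:\mathbb{R}^n\to\mathbb{R}^d$ with Jacobian $J_h(\mathbf{x})\in\mathbb{R}^{d\times n}$. Let $\mathbf{x}:[0,T]\to\mathbb{R}^n$ be the state of the full-order port-Hamiltonian system $$\dot{\mathbf{x}}(t)=(\mathbf{J}-\mathbf{R})\nabla_{\mathbf{x}}H(\mathbf{x}(t))+\mathbf{B}\mathbf{u}(t),\qquad \mathbf{y}(t)=\mathbf{B}^\intercal\nabla_{\mathbf{x}}H(\mathbf{x}(t)),\qquad \mathbf{x}(0)=\mathbf{x}^0 .$$ Let $\boldsymbol{\Phi}\in\mathbb{R}^{n\times r}$ have orthonormal columns, let $\mathbf{D}_r=\mathbf{J}_r-\mathbf{R}_r$ with $\mathbf{J}_r,\mathbf{R}_r\in\mathbb{R}^{r\times r}$, $\mathbf{B}_r\in\mathbb{R}^{r\times m}$, let $\boldsymbol{\Psi}\in\mathbb{R}^{d\times p}$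 have orthonormal columns, $\mathbf{P}=[\mathbf{e}_{\wp_1},\dots,\mathbf{e}_{\wp_p}]\in\mathbb{R}^{d\times p}$ with distinct indices $\wp_i\in\{1,\dots,d\}$ such that $\mathbf{P}^\intercal\boldsymbol{\Psi}$ is invertible, and $\mathbb{P}=\boldsymbol{\Psi}(\mathbf{P}^\intercal\boldsymbol{\Psi})^{-1}\mathbf{P}^\intercal$. Let $\mathbf{x}_r:[0,T]\to\mathbb{R}^r$ be the state of the reduced model $$\dot{\mathbf{x}}_r(t)=\mathbf{D}_r\nabla_{\mathbf{x}_r}H_{h_r}(\mathbf{x}_r(t))+\mathbf{B}_r\mathbf{u}(t),\qquad \mathbf{y}_r(t)=\mathbf{B}_r^\intercal\nabla_{\mathbf{x}_r}H_{h_r}(\mathbf{x}_r(t)),\qquad \mathbf{x}_r(0)=\boldsymbol{\Phi}^\intercal\mathbf{x}^0,$$ where $\nabla_{\mathbf{x}_r}H_{h_r}(\mathbf{x}_r)=\boldsymbol{\Phi}^\intercal\mathbf{Q}\boldsymbol{\Phi}\mathbf{x}_r+\boldsymbol{\Phi}^\intercal J_h^\intercal(\boldsymbol{\Phi}\mathbf{x}_r)\mathbb{P}^\intercal\mathbf{c}$. Let $\mathcal{D}_t[\mathbf{x}]:[0,T]\to\mathbb{R}^n$ be a given approximation of the time derivative $\dot{\mathbf{x}}$ (e.g. a finite-difference approximation). Suppose $\nabla_{\mathbf{x}}H$ and $J_h$ are both Lipschitz continuous. Then $$\int_0^T\|\mathbf{x}-\boldsymbol{\Phi}\mathbf{x}_r\|^2\,dt\le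 C(T)\Big(\int_0^T\|\mathbf{x}-\boldsymbol{\Phi}\boldsymbol{\Phi}^\intercal\mathbf{x}\|^2dt+\int_0^T\|\dot{\mathbf{x}}-\mathcal{D}_t[\mathbf{x}]\|^2dt+\int_0^T\|\boldsymbol{\Phi}^\intercal\mathcal{D}_t[\mathbf{x}]-\mathbf{D}_r\boldsymbol{\Phi}^\intercal\nabla_{\mathbf{x}}H(\mathbf{x})-\mathbf{B}_r\mathbf{u}(t)\|^2dt+\int_0^T\|(\mathbf{I}-\mathbb{P})J_h(\boldsymbol{\Phi}\boldsymbol{\Phi}^\intercal\mathbf{x})\boldsymbol{\Phi}\|^2dt\Big),$$ where $C(T)=\max\{1+C_2^2T\alpha(T),\,C_3^2T\alpha(T),\,T\alpha(T)\}$, with $C_1=\mu(\boldsymbol{\Phi}\mathbf{D}_r\boldsymbol{\Phi}^\intercal\mathbf{Q})+\|\mathbf{D}_r\boldsymbol{\Phi}^\intercal\|\,\mathcal{C}_{\mathrm{Lip}}[J_h]\,\|(\mathbf{P}^\intercal\boldsymbol{\Psi})^{-1}\|\,\|\mathbf{c}\|$, $C_2=\|\mathbf{D}_r\boldsymbol{\Phi}^\intercal\|\,\mathcal{C}_{\mathrm{Lip}}[\nabla_{\mathbf{x}}H]$, $C_3=\|\mathbf{D}_r\|\,\|\mathbf{c}\|$, and $\alpha(T)=4\int_0^Te^{2C_1(T-\tau)}\,d\tau$.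
   Context: $\|\cdot\|$ denotes the Euclidean norm on vectors and the induced (spectral) norm on matrices; $\langle\cdot,\cdot\rangle$ is the Euclidean inner product. For a map $f$ between normed spaces, $\mathcal{C}_{\mathrm{Lip}}[f]=\sup_{\mathbf{u}\ne\mathbf{v}}\|f(\mathbf{u})-f(\mathbf{v})\|/\|\mathbf{u}-\mathbf{v}\|$ is its Lipschitz constant. The logarithmic norm of a square matrix $\mathbf{A}$ is $\mu(\mathbf{A})=\sup_{\mathbf{x}\ne0}\Re\langle\mathbf{x},\mathbf{A}\mathbf{x}\rangle/\langle\mathbf{x},\mathbf{x}\rangle$. $\mathbf{e}_i$ denotes the $i$th unit vector of $\mathbb{R}^d$. *)

theory Defs
  imports "HOL-Analysis.Analysis"
begin

definition opnorm :: "real^'n^'m \<Rightarrow> real" where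
  "opnorm A = onorm (\<lambda>x. A *v x)"

definition lipconst :: "('a::real_normed_vector \<Rightarrow> 'b::real_normed_vector) \<Rightarrow> real" where
  "lipconst f = Sup {norm (f u - f v) / norm (u - v) | u v. u \<noteq> v}"

definition lipconst_op :: "('a::real_normed_vector \<Rightarrow> real^'n^'m) \<Rightarrow> real" where
  "lipconst_op F = Sup {opnorm (F u - F v) / norm (u - v) | u v. u \<noteq> v}"

definition lognorm :: "real^'n^'n \<Rightarrow> real" where
  "lognorm A = Sup {(x \<bullet> (A *v x)) / (x \<bullet> x) | x. x \<noteq> 0}"

definition selmat :: "('p \<Rightarrow> 'd) \<Rightarrow> real^'p^'d" where
  "selmat wp = (\<chi> i j. if i = wp j then 1 else 0)"

definition deim_proj :: "real^'p^'d \<Rightarrow> ('p \<Rightarrow> 'd) \<Rightarrow> real^'d^'d" where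
  "deim_proj Psi wp = Psi ** matrix_inv (transpose (selmat wp) ** Psi) ** transpose (selmat wp)"

text \<open>Gradient of H(x) = 1/2 x^T Q x + c^T h(x) (Q symmetric): Q x + J_h(x)^T c.\<close>
definition gradH :: "real^'n^'n \<Rightarrow> real^'d \<Rightarrow> (real^'n \<Rightarrow> real^'n^'d) \<Rightarrow> real^'n \<Rightarrow> real^'n" where
  "gradH Q c Jh x = Q *v x + transpose (Jh x) *v c"

definition gradHr :: "real^'n^'n \<Rightarrow> real^'d \<Rightarrow> (real^'n \<Rightarrow> real^'n^'d) \<Rightarrow> real^'r^'n
    \<Rightarrow> real^'d^'d \<Rightarrow> real^'r \<Rightarrow> real^'r" where
  "gradHr Q c Jh Phi PP xr =
     transpose Phi *v (Q *v (Phi *v xr))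
   + transpose Phi *v (transpose (Jh (Phi *v xr)) *v (transpose PP *v c))"

end

theory Submission
  imports Defs
begin

(*
  Write e = Phi^T x - x_r for the error in reduced coordinates, so that e(0) = 0 and, by
  Pythagoras, |x - Phi x_r|^2 = |x - Phi Phi^T x|^2 + |e|^2.  Splitting the error equation into
  the time-discretisation error, the reduced residual, a projection error, the linear part
  Phi D_r Phi^T Q, the DEIM error and a Lipschitz remainder gives the energy inequality
  e . e' <= C1 |e|^2 + |e| f, where f is the sum of the four pointwise error terms weighted by
  1, 1, C2, C3.  Gronwall's argument, run on sqrt (|e|^2 + eps) because |e| need not be
  differentiable where e vanishes, yields |e(t)| <= int_0^t exp (C1 (t - s)) f(s) ds.  Cauchy-Schwarz
  then bounds |e(t)|^2 by (alpha / 4) int_0^T f^2 uniformly in t, the inequality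
  (p + q + r + s)^2 <= 4 (p^2 + q^2 + r^2 + s^2) splits int_0^T f^2 into the four error integrals,
  and integrating over [0, T] produces the factor T alpha.
*)

(* Keep products with a transposed matrix as written instead of the simp normal form x v* A. *)
declare transpose_matrix_vector [simp del]

section \<open>Spectral norm and logarithmic norm\<close>

lemma inner_matrix_vector_transpose:
  fixes A :: "real^'n^'m"
  shows "(A *v x) \<bullet> y = x \<bullet> (transpose A *v y)"
  by (metis dot_lmul_matrix inner_commute transpose_matrix_vector)

lemma transpose_diff: "transpose (A - B) = transpose A - transpose (B :: 'a::ab_group_add^'n^'m)"
  by (simp add: vec_eq_iff transpose_def)

lemma norm_matrix_vector_le_opnorm:
  fixes A :: "real^'n^'m"
  shows "norm (A *v x) \<le> opnorm A * norm x"
  unfolding opnorm_def by (rule onorm[OF matrix_vector_mul_bounded_linear])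

lemma opnorm_nonneg:
  fixes A :: "real^'n^'m"
  shows "0 \<le> opnorm A"
  unfolding opnorm_def by (rule onorm_pos_le[OF matrix_vector_mul_bounded_linear])

lemma opnorm_le:
  fixes A :: "real^'n^'m"
  assumes "\<And>x. norm (A *v x) \<le> b * norm x"
  shows "opnorm A \<le> b"
  unfolding opnorm_def using assms by (rule onorm_le)

lemma opnorm_zero [simp]: "opnorm (0 :: real^'n^'m) = 0"
  by (rule antisym[OF opnorm_le opnorm_nonneg]) simp

lemma norm_matrix_vector_le:
  fixes A :: "real^'n^'m"
  assumes "opnorm A \<le> a" and "norm x \<le> b"
  shows "norm (A *v x) \<le> a * b"
proof -
  have a: "0 \<le> a" using opnorm_nonneg assms(1) by (rule order_trans)
  show ?thesis
    using norm_matrix_vector_le_opnorm[of A x] mult_mono[OF assms a norm_ge_zero] by linarith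
qed

(* The norm of real^'n^'m is the Frobenius norm. *)
lemma opnorm_le_norm:
  fixes A :: "real^'n^'m"
  shows "opnorm A \<le> norm A"
proof (rule opnorm_le)
  fix x :: "real^'n"
  have "norm (A *v x) ^ 2 = (\<Sum>i\<in>UNIV. (A $ i \<bullet> x) ^ 2)"
    by (simp add: norm_vec_def L2_set_def matrix_vector_mul_component sum_nonneg)
  also have "\<dots> \<le> (\<Sum>i\<in>UNIV. (norm (A $ i) * norm x) ^ 2)"
    by (intro sum_mono) (simp add: power_mult_distrib power2_norm_eq_inner Cauchy_Schwarz_ineq)
  also have "\<dots> = (norm A * norm x) ^ 2"
    by (simp add: power_mult_distrib norm_vec_def[of A] L2_set_def sum_nonneg flip: sum_distrib_right)
  finally show "norm (A *v x) \<le> norm A * norm x"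
    by (rule power2_le_imp_le) simp
qed

lemma opnorm_transpose_le:
  fixes A :: "real^'n^'m"
  shows "opnorm (transpose A) \<le> opnorm A"
proof (rule opnorm_le)
  fix y :: "real^'m"
  have "norm (transpose A *v y) ^ 2 = (A *v (transpose A *v y)) \<bullet> y"
    by (simp only: power2_norm_eq_inner inner_matrix_vector_transpose)
  also have "\<dots> \<le> opnorm A * norm (transpose A *v y) * norm y"
    by (rule order_trans[OF norm_cauchy_schwarz]) (simp add: mult_right_mono norm_matrix_vector_le_opnorm)
  finally show "norm (transpose A *v y) \<le> opnorm A * norm y"
    by (cases "transpose A *v y = 0") (simp_all add: opnorm_nonneg power2_eq_square)
qed

lemma opnorm_transpose [simp]:
  fixes A :: "real^'n^'m"
  shows "opnorm (transpose A) = opnorm A"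
  using opnorm_transpose_le[of A] opnorm_transpose_le[of "transpose A"] by simp

lemma opnorm_mult_le:
  fixes A :: "real^'n^'m" and B :: "real^'k^'n"
  shows "opnorm (A ** B) \<le> opnorm A * opnorm B"
  unfolding opnorm_def matrix_vector_mul_assoc[symmetric]
  using onorm_compose[of "(*v) A" "(*v) B"] by (simp add: o_def)

lemma opnorm_diff_abs_le:
  fixes A B :: "real^'n^'m"
  shows "\<bar>opnorm A - opnorm B\<bar> \<le> opnorm (A - B)"
proof -
  have triangle: "opnorm (M + N) \<le> opnorm M + opnorm N" for M N :: "real^'n^'m"
    unfolding opnorm_def matrix_vector_mult_add_rdistrib
    by (rule onorm_triangle) simp_all
  have "opnorm (B - A) \<le> opnorm (A - B)"
  proof (rule opnorm_le)
    fix x :: "real^'n"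
    have "norm ((B - A) *v x) = norm ((A - B) *v x)"
      by (metis matrix_vector_mult_diff_rdistrib norm_minus_commute)
    then show "norm ((B - A) *v x) \<le> opnorm (A - B) * norm x"
      by (simp add: norm_matrix_vector_le_opnorm)
  qed
  then show ?thesis
    using triangle[of "A - B" B] triangle[of "B - A" A] by simp
qed

lemma lipschitz_on_opnorm_sandwich:
  fixes A :: "real^'k^'m" and B :: "real^'n^'l"
  shows "(opnorm A * opnorm B)-lipschitz_on S (\<lambda>M :: real^'l^'k. opnorm (A ** M ** B))"
proof (rule lipschitz_onI)
  fix M N :: "real^'l^'k"
  have "A ** M ** B - A ** N ** B = A ** (M - N) ** B"
    by (simp add: vec_eq_iff matrix_matrix_mult_def algebra_simps sum_subtractf)
  then have "dist (opnorm (A ** M ** B)) (opnorm (A ** N ** B)) \<le> opnorm (A ** (M - N) ** B)"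
    using opnorm_diff_abs_le[of "A ** M ** B" "A ** N ** B"] by (simp add: dist_real_def)
  also have "\<dots> \<le> opnorm A * opnorm (M - N) * opnorm B"
    by (meson opnorm_mult_le opnorm_nonneg mult_left_mono mult_right_mono order_trans)
  also have "\<dots> \<le> opnorm A * opnorm B * dist M N"
    using opnorm_le_norm[of "M - N"]
    by (simp add: dist_norm mult.commute mult.left_commute mult_left_mono opnorm_nonneg)
  finally show "dist (opnorm (A ** M ** B)) (opnorm (A ** N ** B)) \<le> opnorm A * opnorm B * dist M N" .
next
  show "0 \<le> opnorm A * opnorm B" by (simp add: opnorm_nonneg)
qed

lemma continuous_on_opnorm_sandwich:
  fixes A :: "real^'k^'m" and B :: "real^'n^'l" and F :: "'a::topological_space \<Rightarrow> real^'l^'k"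
  assumes "continuous_on S F"
  shows "continuous_on S (\<lambda>t. opnorm (A ** F t ** B))"
  using lipschitz_on_continuous_on[OF lipschitz_on_opnorm_sandwich] assms
  by (rule continuous_on_compose2) auto

lemma inner_le_of_norm_le:
  fixes x y :: "'a::real_inner"
  assumes "norm y \<le> b"
  shows "x \<bullet> y \<le> norm x * b"
  using norm_cauchy_schwarz[of x y] mult_left_mono[OF assms norm_ge_zero[of x]] by linarith

lemma inner_matrix_vector_le_lognorm:
  fixes A :: "real^'n^'n"
  shows "x \<bullet> (A *v x) \<le> lognorm A * (x \<bullet> x)"
proof (cases "x = 0")
  case False
  have "bdd_above {(y \<bullet> (A *v y)) / (y \<bullet> y) | y. y \<noteq> 0}"
  proof (rule bdd_aboveI, clarify)
    fix y :: "real^'n"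
    assume "y \<noteq> 0"
    have "y \<bullet> (A *v y) \<le> norm y * (opnorm A * norm y)"
      by (rule order_trans[OF norm_cauchy_schwarz]) (simp add: mult_left_mono norm_matrix_vector_le_opnorm)
    then show "(y \<bullet> (A *v y)) / (y \<bullet> y) \<le> opnorm A"
      using \<open>y \<noteq> 0\<close> by (simp add: divide_le_eq power2_norm_eq_inner[symmetric] power2_eq_square mult_ac)
  qed
  then have "(x \<bullet> (A *v x)) / (x \<bullet> x) \<le> lognorm A"
    unfolding lognorm_def by (rule cSup_upper[rotated]) (use False in blast)
  then show ?thesis using False by (simp add: divide_le_eq)
qed simp

section \<open>Orthonormal columns and the DEIM projector\<close>

lemma orthonormal_inner:
  fixes A :: "real^'r^'n"
  assumes "transpose A ** A = mat 1"
  shows "(A *v x) \<bullet> (A *v y) = x \<bullet> y"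
  by (simp add: inner_matrix_vector_transpose matrix_vector_mul_assoc assms)

lemma orthonormal_norm:
  fixes A :: "real^'r^'n"
  assumes "transpose A ** A = mat 1"
  shows "norm (A *v x) = norm x"
  by (simp add: norm_eq_sqrt_inner orthonormal_inner[OF assms])

lemma orthonormal_opnorm_le:
  fixes A :: "real^'r^'n"
  assumes "transpose A ** A = mat 1"
  shows "opnorm A \<le> 1"
  by (rule opnorm_le) (simp add: orthonormal_norm[OF assms])

lemma orthonormal_norm_transpose_le:
  fixes A :: "real^'r^'n"
  assumes "transpose A ** A = mat 1"
  shows "norm (transpose A *v x) \<le> norm x"
  using norm_matrix_vector_le_opnorm[of "transpose A" x] orthonormal_opnorm_le[OF assms]
    mult_right_mono[OF _ norm_ge_zero, of "opnorm A" 1 x]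
  by (simp)

lemma orthonormal_norm_diff_square:
  fixes A :: "real^'r^'n"
  assumes "transpose A ** A = mat 1"
  shows "norm (x - A *v y) ^ 2 = norm (x - A *v (transpose A *v x)) ^ 2 + norm (transpose A *v x - y) ^ 2"
proof -
  have "(A *v w) \<bullet> (x - A *v (transpose A *v x)) = 0" for w
    by (simp add: inner_matrix_vector_transpose matrix_vector_mult_diff_distrib
        matrix_vector_mul_assoc matrix_mul_assoc assms)
  then have "orthogonal (x - A *v (transpose A *v x)) (A *v (transpose A *v x - y))"
    by (simp add: orthogonal_def inner_commute)
  then have "norm (x - A *v (transpose A *v x) + A *v (transpose A *v x - y)) ^ 2
      = norm (x - A *v (transpose A *v x)) ^ 2 + norm (A *v (transpose A *v x - y)) ^ 2"
    by (rule norm_add_Pythagorean)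
  moreover have "x - A *v (transpose A *v x) + A *v (transpose A *v x - y) = x - A *v y"
    by (simp add: matrix_vector_mult_diff_distrib)
  ultimately show ?thesis
    by (simp add: orthonormal_norm[OF assms])
qed

lemma orthonormal_inner_le_lognorm:
  fixes A :: "real^'r^'n" and D :: "real^'r^'r" and Q :: "real^'n^'n"
  assumes "transpose A ** A = mat 1"
  shows "x \<bullet> (D *v (transpose A *v (Q *v (A *v x)))) \<le> lognorm (A ** D ** transpose A ** Q) * norm x ^ 2"
proof -
  have "x \<bullet> (D *v (transpose A *v (Q *v (A *v x)))) = (A *v x) \<bullet> ((A ** D ** transpose A ** Q) *v (A *v x))"
    by (simp add: orthonormal_inner[OF assms, symmetric] matrix_vector_mul_assoc matrix_mul_assoc)
  also have "\<dots> \<le> lognorm (A ** D ** transpose A ** Q) * ((A *v x) \<bullet> (A *v x))"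
    by (rule inner_matrix_vector_le_lognorm)
  finally show ?thesis
    by (simp add: orthonormal_inner[OF assms] power2_norm_eq_inner)
qed

lemma selmat_orthonormal:
  fixes wp :: "'p::finite \<Rightarrow> 'd::finite"
  assumes "inj wp"
  shows "transpose (selmat wp) ** selmat wp = mat 1"
proof -
  have "(\<Sum>i\<in>UNIV. (if i = wp j then 1 else 0) * (if i = wp k then 1 else 0)) = (if j = k then 1 else 0 :: real)"
    for j k
  proof -
    have "(\<Sum>i\<in>UNIV. (if i = wp j then 1 else 0) * (if i = wp k then 1 else 0))
        = (\<Sum>i\<in>UNIV. if i = wp j then (if wp j = wp k then 1 else 0) else 0 :: real)"
      by (rule sum.cong) auto
    then show ?thesis using inj_eq[OF assms] by simp
  qed
  then show ?thesis
    by (simp add: vec_eq_iff matrix_matrix_mult_def transpose_def selmat_def mat_def)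
qed

lemma norm_deim_proj_transpose_le:
  fixes Psi :: "real^'p^'d" and wp :: "'p \<Rightarrow> 'd"
  assumes "inj wp" and "transpose Psi ** Psi = mat 1"
  shows "norm (transpose (deim_proj Psi wp) *v c)
         \<le> opnorm (matrix_inv (transpose (selmat wp) ** Psi)) * norm c"
proof -
  define M where "M = matrix_inv (transpose (selmat wp) ** Psi)"
  have "transpose (deim_proj Psi wp) *v c = selmat wp *v (transpose M *v (transpose Psi *v c))"
    by (simp only: deim_proj_def M_def matrix_transpose_mul matrix_vector_mul_assoc
        matrix_mul_assoc transpose_transpose)
  then have "norm (transpose (deim_proj Psi wp) *v c) = norm (transpose M *v (transpose Psi *v c))"
    by (simp only: orthonormal_norm[OF selmat_orthonormal[OF assms(1)]])
  also have "\<dots> \<le> opnorm M * norm (transpose Psi *v c)"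
    using norm_matrix_vector_le_opnorm[of "transpose M"] by (simp)
  also have "\<dots> \<le> opnorm M * norm c"
    by (intro mult_left_mono orthonormal_norm_transpose_le[OF assms(2)] opnorm_nonneg)
  finally show ?thesis by (simp only: M_def)
qed

section \<open>Lipschitz constants\<close>

lemma le_Sup_difference_quotient:
  fixes d :: "'a::real_normed_vector \<Rightarrow> 'a \<Rightarrow> real"
  assumes "\<And>u v. d u v \<le> L * norm (u - v)" and "\<And>u. d u u = 0"
  shows "d u v \<le> Sup {d u v / norm (u - v) | u v. u \<noteq> v} * norm (u - v)"
proof (cases "u = v")
  case False
  have "bdd_above {d u v / norm (u - v) | u v. u \<noteq> v}"
    by (rule bdd_aboveI[where M = L]) (auto simp: divide_le_eq assms(1))
  then have "d u v / norm (u - v) \<le> Sup {d u v / norm (u - v) | u v. u \<noteq> v}"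
    by (rule cSup_upper[rotated]) (use False in blast)
  then show ?thesis using False by (simp add: divide_le_eq)
qed (simp add: assms(2))

lemma Sup_difference_quotient_nonneg:
  fixes d :: "'a::euclidean_space \<Rightarrow> 'a \<Rightarrow> real"
  assumes "\<And>u v. d u v \<le> L * norm (u - v)" and "\<And>u v. 0 \<le> d u v"
  shows "0 \<le> Sup {d u v / norm (u - v) | u v. u \<noteq> v}"
proof -
  obtain b :: 'a where "b \<in> Basis" using nonempty_Basis by blast
  then have "b \<noteq> 0" by (rule nonzero_Basis)
  have "bdd_above {d u v / norm (u - v) | u v. u \<noteq> v}"
    by (rule bdd_aboveI[where M = L]) (auto simp: divide_le_eq assms(1))
  then have "d b 0 / norm (b - 0) \<le> Sup {d u v / norm (u - v) | u v. u \<noteq> v}"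
    by (rule cSup_upper[rotated]) (use \<open>b \<noteq> 0\<close> in blast)
  then show ?thesis by (rule order_trans[rotated]) (simp add: assms(2))
qed

lemma lipconst:
  fixes f :: "'a::euclidean_space \<Rightarrow> 'b::real_normed_vector"
  assumes "L-lipschitz_on UNIV f"
  shows "norm (f u - f v) \<le> lipconst f * norm (u - v)" and "0 \<le> lipconst f"
proof -
  note lip = lipschitz_on_normD[OF assms UNIV_I UNIV_I]
  show "norm (f u - f v) \<le> lipconst f * norm (u - v)"
    unfolding lipconst_def by (rule le_Sup_difference_quotient[OF lip]) simp
  show "0 \<le> lipconst f"
    unfolding lipconst_def by (rule Sup_difference_quotient_nonneg[OF lip]) simp
qed

lemma lipconst_op:
  fixes F :: "'a::euclidean_space \<Rightarrow> real^'n^'m"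
  assumes "L-lipschitz_on UNIV F"
  shows "opnorm (F u - F v) \<le> lipconst_op F * norm (u - v)" and "0 \<le> lipconst_op F"
proof -
  have lip: "opnorm (F u - F v) \<le> L * norm (u - v)" for u v
    using opnorm_le_norm lipschitz_on_normD[OF assms] by (blast intro: order_trans)
  show "opnorm (F u - F v) \<le> lipconst_op F * norm (u - v)"
    unfolding lipconst_op_def by (rule le_Sup_difference_quotient[OF lip]) simp
  show "0 \<le> lipconst_op F"
    unfolding lipconst_op_def by (rule Sup_difference_quotient_nonneg[OF lip]) (simp add: opnorm_nonneg)
qed

section \<open>The error equation\<close>

lemma reduced_residual_decomposition:
  fixes Q :: "real^'n^'n" and c :: "real^'d" and Jh :: "real^'n \<Rightarrow> real^'n^'d"
    and Phi :: "real^'r^'n" and D :: "real^'r^'r" and Br :: "real^'m^'r" and PP :: "real^'d^'d"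
    and X X' Dv :: "real^'n" and Xr :: "real^'r" and U :: "real^'m"
  defines "z \<equiv> Phi *v (transpose Phi *v X)" and "e \<equiv> transpose Phi *v X - Xr"
  shows "transpose Phi *v X' - (D *v gradHr Q c Jh Phi PP Xr + Br *v U)
       = transpose Phi *v (X' - Dv)
       + (transpose Phi *v Dv - D *v (transpose Phi *v gradH Q c Jh X) - Br *v U)
       + (D ** transpose Phi) *v (gradH Q c Jh X - gradH Q c Jh z)
       + D *v (transpose Phi *v (Q *v (Phi *v e)))
       + D *v (transpose ((mat 1 - PP) ** Jh z ** Phi) *v c)
       + (D ** transpose Phi) *v (transpose (Jh z - Jh (Phi *v Xr)) *v (transpose PP *v c))"
proof -
  have ze: "z - Phi *v Xr = Phi *v e"
    by (simp add: z_def e_def matrix_vector_mult_diff_distrib)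
  have Jh_term: "transpose ((mat 1 - PP) ** Jh z ** Phi) *v c
      = transpose Phi *v (transpose (Jh z) *v c) - transpose Phi *v (transpose (Jh z) *v (transpose PP *v c))"
    by (simp add: matrix_transpose_mul matrix_vector_mul_assoc[symmetric] transpose_diff
        matrix_vector_mult_diff_distrib matrix_vector_mult_diff_rdistrib)
  have Jh_diff_term: "(D ** transpose Phi) *v (transpose (Jh z - Jh (Phi *v Xr)) *v w)
      = D *v (transpose Phi *v (transpose (Jh z) *v w))
        - D *v (transpose Phi *v (transpose (Jh (Phi *v Xr)) *v w))" for w
    by (simp add: matrix_vector_mul_assoc[symmetric] transpose_diff matrix_vector_mult_diff_distrib
        matrix_vector_mult_diff_rdistrib)
  have Q_term: "transpose Phi *v (Q *v (Phi *v e))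
      = transpose Phi *v (Q *v z) - transpose Phi *v (Q *v (Phi *v Xr))"
    by (simp add: ze[symmetric] matrix_vector_mult_diff_distrib)
  show ?thesis
    unfolding gradH_def gradHr_def Jh_term Jh_diff_term Q_term
    by (simp add: matrix_vector_mult_diff_distrib matrix_vector_right_distrib
        matrix_vector_mul_assoc[symmetric] algebra_simps)
qed

lemma reduced_energy_inequality:
  fixes Q :: "real^'n^'n" and c :: "real^'d" and Jh :: "real^'n \<Rightarrow> real^'n^'d"
    and Phi :: "real^'r^'n" and D :: "real^'r^'r" and Br :: "real^'m^'r" and PP :: "real^'d^'d"
    and X X' Dv :: "real^'n" and Xr :: "real^'r" and U :: "real^'m"
  assumes Phi_orth: "transpose Phi ** Phi = mat 1"
    and gradH_lip: "\<And>u v. norm (gradH Q c Jh u - gradH Q c Jh v) \<le> Lg * norm (u - v)"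
    and Jh_lip: "\<And>u v. opnorm (Jh u - Jh v) \<le> LJ * norm (u - v)"
    and PP_bound: "norm (transpose PP *v c) \<le> Mi * norm c"
  defines "z \<equiv> Phi *v (transpose Phi *v X)" and "e \<equiv> transpose Phi *v X - Xr"
  shows "e \<bullet> (transpose Phi *v X' - (D *v gradHr Q c Jh Phi PP Xr + Br *v U))
    \<le> (lognorm (Phi ** D ** transpose Phi ** Q) + opnorm (D ** transpose Phi) * LJ * Mi * norm c)
          * norm e ^ 2
      + norm e * (norm (X' - Dv)
          + norm (transpose Phi *v Dv - D *v (transpose Phi *v gradH Q c Jh X) - Br *v U)
          + opnorm (D ** transpose Phi) * Lg * norm (X - z)
          + opnorm D * norm c * opnorm ((mat 1 - PP) ** Jh z ** Phi))"
proof -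
  define DPhiT where "DPhiT = D ** transpose Phi"
  define K where "K = (mat 1 - PP) ** Jh z ** Phi"
  define r where "r = transpose Phi *v Dv - D *v (transpose Phi *v gradH Q c Jh X) - Br *v U"
  have "transpose Phi *v X' - (D *v gradHr Q c Jh Phi PP Xr + Br *v U)
       = transpose Phi *v (X' - Dv) + r
       + DPhiT *v (gradH Q c Jh X - gradH Q c Jh z)
       + D *v (transpose Phi *v (Q *v (Phi *v e)))
       + D *v (transpose K *v c)
       + DPhiT *v (transpose (Jh z - Jh (Phi *v Xr)) *v (transpose PP *v c))"
    unfolding z_def e_def r_def DPhiT_def K_def by (rule reduced_residual_decomposition)
  then have "e \<bullet> (transpose Phi *v X' - (D *v gradHr Q c Jh Phi PP Xr + Br *v U))
       = e \<bullet> (transpose Phi *v (X' - Dv)) + e \<bullet> r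
       + e \<bullet> (DPhiT *v (gradH Q c Jh X - gradH Q c Jh z))
       + e \<bullet> (D *v (transpose Phi *v (Q *v (Phi *v e))))
       + e \<bullet> (D *v (transpose K *v c))
       + e \<bullet> (DPhiT *v (transpose (Jh z - Jh (Phi *v Xr)) *v (transpose PP *v c)))"
    by (simp only: inner_add_right)
  also have "\<dots> \<le> norm e * norm (X' - Dv) + norm e * norm r
       + norm e * (opnorm DPhiT * Lg * norm (X - z))
       + lognorm (Phi ** D ** transpose Phi ** Q) * norm e ^ 2
       + norm e * (opnorm D * (opnorm K * norm c))
       + norm e * (opnorm DPhiT * ((LJ * norm e) * (Mi * norm c)))"
  proof (intro add_mono)
    show "e \<bullet> (transpose Phi *v (X' - Dv)) \<le> norm e * norm (X' - Dv)"
      by (rule inner_le_of_norm_le)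
         (simp add: orthonormal_norm_transpose_le[OF Phi_orth])
    show "e \<bullet> r \<le> norm e * norm r"
      by (rule norm_cauchy_schwarz)
    show "e \<bullet> (DPhiT *v (gradH Q c Jh X - gradH Q c Jh z)) \<le> norm e * (opnorm DPhiT * Lg * norm (X - z))"
      by (rule inner_le_of_norm_le, rule order_trans[OF norm_matrix_vector_le_opnorm])
         (simp add: mult.assoc mult_left_mono gradH_lip opnorm_nonneg)
    show "e \<bullet> (D *v (transpose Phi *v (Q *v (Phi *v e))))
        \<le> lognorm (Phi ** D ** transpose Phi ** Q) * norm e ^ 2"
      by (rule orthonormal_inner_le_lognorm[OF Phi_orth])
    show "e \<bullet> (D *v (transpose K *v c)) \<le> norm e * (opnorm D * (opnorm K * norm c))"
      by (intro inner_le_of_norm_le norm_matrix_vector_le) simp_all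
    have "z - Phi *v Xr = Phi *v e"
      by (simp add: z_def e_def matrix_vector_mult_diff_distrib)
    then have "opnorm (transpose (Jh z - Jh (Phi *v Xr))) \<le> LJ * norm e"
      using Jh_lip[of z "Phi *v Xr"] by (simp add: orthonormal_norm[OF Phi_orth])
    then show "e \<bullet> (DPhiT *v (transpose (Jh z - Jh (Phi *v Xr)) *v (transpose PP *v c)))
        \<le> norm e * (opnorm DPhiT * ((LJ * norm e) * (Mi * norm c)))"
      by (intro inner_le_of_norm_le norm_matrix_vector_le[OF order_refl] norm_matrix_vector_le PP_bound)
  qed
  also have "\<dots> = (lognorm (Phi ** D ** transpose Phi ** Q) + opnorm DPhiT * LJ * Mi * norm c) * norm e ^ 2
      + norm e * (norm (X' - Dv) + norm r + opnorm DPhiT * Lg * norm (X - z) + opnorm D * norm c * opnorm K)"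
    by (simp add: power2_eq_square algebra_simps)
  finally show ?thesis by (simp only: DPhiT_def K_def r_def)
qed

section \<open>A Gronwall inequality\<close>

lemma has_real_derivative_sqrt_norm_sq_add:
  fixes E :: "real \<Rightarrow> 'a::real_inner"
  assumes E: "(E has_vector_derivative E') (at s within S)" and "0 < \<epsilon>"
  shows "((\<lambda>s. sqrt ((norm (E s))\<^sup>2 + \<epsilon>)) has_real_derivative
           (E s \<bullet> E') / sqrt ((norm (E s))\<^sup>2 + \<epsilon>)) (at s within S)"
proof -
  have pos: "0 < (norm (E s))\<^sup>2 + \<epsilon>" using \<open>0 < \<epsilon>\<close> by (simp add: add_nonneg_pos)
  have "((\<lambda>s. E s \<bullet> E s) has_real_derivative 2 * (E s \<bullet> E')) (at s within S)"
    unfolding has_field_derivative_def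
    by (rule has_derivative_eq_rhs[OF has_derivative_inner[OF E[unfolded has_vector_derivative_def]
          E[unfolded has_vector_derivative_def]]])
       (auto simp: fun_eq_iff inner_commute algebra_simps)
  from DERIV_add[OF this DERIV_const[of \<epsilon>]]
  have "((\<lambda>s. (norm (E s))\<^sup>2 + \<epsilon>) has_real_derivative 2 * (E s \<bullet> E')) (at s within S)"
    by (simp add: power2_norm_eq_inner)
  from DERIV_chain2[OF DERIV_real_sqrt[OF pos] this]
  show ?thesis using pos by (simp add: field_simps)
qed

lemma regularized_derivative_le:
  fixes p n g C \<epsilon> s t :: real
  assumes "0 < \<epsilon>" and "0 \<le> n" and "0 \<le> g" and "0 \<le> s" and "s \<le> t"
    and p: "p \<le> C * n\<^sup>2 + n * g"
  defines "\<phi> \<equiv> sqrt (n\<^sup>2 + \<epsilon>)"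
  shows "exp (- C * s) * (p / \<phi> - C * \<phi>) \<le> exp (- C * s) * g + \<bar>C\<bar> * exp (\<bar>C\<bar> * t) * sqrt \<epsilon>"
proof -
  have \<phi>_ge: "sqrt \<epsilon> \<le> \<phi>" and \<phi>_ge_n: "n \<le> \<phi>"
    using \<open>0 < \<epsilon>\<close> \<open>0 \<le> n\<close> by (simp_all add: \<phi>_def real_le_rsqrt)
  have \<phi>_pos: "0 < \<phi>"
    using \<phi>_ge \<open>0 < \<epsilon>\<close> by (meson less_le_trans real_sqrt_gt_zero)
  have "p / \<phi> - C * \<phi> \<le> (C * n\<^sup>2 + n * g) / \<phi> - C * \<phi>"
    using p \<phi>_pos by (simp add: divide_right_mono)
  also have "\<dots> = n / \<phi> * g - C * (\<epsilon> / \<phi>)"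
    using \<phi>_pos \<open>0 < \<epsilon>\<close> by (simp add: \<phi>_def field_simps power2_eq_square)
  also have "\<dots> \<le> g + \<bar>C\<bar> * sqrt \<epsilon>"
  proof -
    have weight: "n / \<phi> * g \<le> g"
      using \<phi>_ge_n \<phi>_pos \<open>0 \<le> g\<close> by (simp add: divide_le_eq mult.commute[of g] mult_right_mono)
    have "\<epsilon> / \<phi> \<le> \<epsilon> / sqrt \<epsilon>"
      using \<phi>_ge \<phi>_pos \<open>0 < \<epsilon>\<close> by (intro divide_left_mono) auto
    then have "\<epsilon> / \<phi> \<le> sqrt \<epsilon>"
      using \<open>0 < \<epsilon>\<close> by (simp add: real_div_sqrt)
    then have "- (C * (\<epsilon> / \<phi>)) \<le> \<bar>C\<bar> * sqrt \<epsilon>"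
      using \<phi>_pos \<open>0 < \<epsilon>\<close> by (smt (verit) abs_ge_minus_self divide_pos_pos mult_mono mult_minus_left)
    with weight show ?thesis by linarith
  qed
  finally have "exp (- C * s) * (p / \<phi> - C * \<phi>) \<le> exp (- C * s) * (g + \<bar>C\<bar> * sqrt \<epsilon>)"
    by (simp add: mult_left_mono)
  also have "\<dots> \<le> exp (- C * s) * g + \<bar>C\<bar> * exp (\<bar>C\<bar> * t) * sqrt \<epsilon>"
  proof -
    have "- C * s \<le> \<bar>C\<bar> * t"
      using \<open>0 \<le> s\<close> \<open>s \<le> t\<close> mult_mono[of "- C" "\<bar>C\<bar>" s t] by auto
    then have "exp (- C * s) * (\<bar>C\<bar> * sqrt \<epsilon>) \<le> exp (\<bar>C\<bar> * t) * (\<bar>C\<bar> * sqrt \<epsilon>)"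
      using \<open>0 < \<epsilon>\<close> by (intro mult_right_mono) auto
    then show ?thesis
      by (simp add: distrib_left mult_ac)
  qed
  finally show ?thesis .
qed

lemma regularized_energy_bound:
  fixes E E' :: "real \<Rightarrow> 'a::real_inner" and f :: "real \<Rightarrow> real"
  assumes "0 \<le> t" and "0 < \<epsilon>"
    and E_deriv: "\<And>s. s \<in> {0..t} \<Longrightarrow> (E has_vector_derivative E' s) (at s within {0..t})"
    and E0: "E 0 = 0"
    and energy: "\<And>s. s \<in> {0..t} \<Longrightarrow> E s \<bullet> E' s \<le> C * (norm (E s))\<^sup>2 + norm (E s) * f s"
    and f_nonneg: "\<And>s. s \<in> {0..t} \<Longrightarrow> 0 \<le> f s"
    and f_int: "(\<lambda>s. exp (- C * s) * f s) integrable_on {0..t}"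
  shows "exp (- C * t) * norm (E t)
    \<le> integral {0..t} (\<lambda>s. exp (- C * s) * f s) + (1 + \<bar>C\<bar> * exp (\<bar>C\<bar> * t) * t) * sqrt \<epsilon>"
proof -
  define M where "M = \<bar>C\<bar> * exp (\<bar>C\<bar> * t)"
  define \<phi> where "\<phi> s = sqrt ((norm (E s))\<^sup>2 + \<epsilon>)" for s
  define \<psi>' where "\<psi>' s = exp (- C * s) * ((E s \<bullet> E' s) / \<phi> s - C * \<phi> s)" for s
  have \<phi>_ge_norm: "norm (E s) \<le> \<phi> s" for s
    using \<open>0 < \<epsilon>\<close> by (simp add: \<phi>_def real_le_rsqrt)
  have \<psi>_deriv: "((\<lambda>s. exp (- C * s) * \<phi> s) has_real_derivative \<psi>' s) (at s within {0..t})"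
    if "s \<in> {0..t}" for s
  proof -
    have "((\<lambda>s. exp (- C * s)) has_real_derivative exp (- C * s) * (- C)) (at s within {0..t})"
      by (auto intro!: derivative_eq_intros)
    from DERIV_mult[OF this has_real_derivative_sqrt_norm_sq_add[OF E_deriv[OF that] \<open>0 < \<epsilon>\<close>]]
    show ?thesis
      unfolding \<phi>_def[abs_def] by (rule DERIV_cong) (simp add: \<psi>'_def \<phi>_def algebra_simps)
  qed
  have \<psi>'_le: "\<psi>' s \<le> exp (- C * s) * f s + M * sqrt \<epsilon>" if "s \<in> {0..t}" for s
    unfolding \<psi>'_def \<phi>_def M_def
    using regularized_derivative_le[OF \<open>0 < \<epsilon>\<close> norm_ge_zero f_nonneg[OF that] _ _ energy[OF that]] that
    by simp
  have "(\<psi>' has_integral exp (- C * t) * \<phi> t - \<phi> 0) {0..t}"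
    using fundamental_theorem_of_calculus[OF \<open>0 \<le> t\<close>, of "\<lambda>s. exp (- C * s) * \<phi> s" \<psi>'] \<psi>_deriv
    by (simp add: has_real_derivative_iff_has_vector_derivative)
  moreover have "(\<lambda>s. exp (- C * s) * f s + M * sqrt \<epsilon>) integrable_on {0..t}"
    using f_int by (rule integrable_add) (rule integrable_const_ivl)
  ultimately have "exp (- C * t) * \<phi> t - \<phi> 0 \<le> integral {0..t} (\<lambda>s. exp (- C * s) * f s + M * sqrt \<epsilon>)"
    by (rule has_integral_le[OF _ integrable_integral]) (use \<psi>'_le in auto)
  also have "\<dots> = integral {0..t} (\<lambda>s. exp (- C * s) * f s) + M * sqrt \<epsilon> * t"
    by (subst integral_add[OF f_int integrable_const_ivl]) (use \<open>0 \<le> t\<close> in simp)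
  finally have "exp (- C * t) * \<phi> t - \<phi> 0 \<le> integral {0..t} (\<lambda>s. exp (- C * s) * f s) + M * sqrt \<epsilon> * t" .
  moreover have "exp (- C * t) * norm (E t) \<le> exp (- C * t) * \<phi> t"
    by (simp add: \<phi>_ge_norm)
  moreover have "\<phi> 0 = sqrt \<epsilon>"
    by (simp add: \<phi>_def E0)
  moreover have "(1 + M * t) * sqrt \<epsilon> = sqrt \<epsilon> + M * sqrt \<epsilon> * t"
    by (simp add: algebra_simps)
  ultimately show ?thesis
    unfolding M_def[symmetric] by linarith
qed

lemma continuous_mult_integrable_on:
  fixes g f :: "real \<Rightarrow> real"
  assumes "continuous_on {a..b} g" and "f absolutely_integrable_on {a..b}"
  shows "(\<lambda>s. g s * f s) integrable_on {a..b}"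
proof -
  have "(\<lambda>s. g s * f s) absolutely_integrable_on {a..b}"
    using assms
    by (intro absolutely_integrable_bounded_measurable_product_real continuous_imp_measurable_on_sets_lebesgue
        compact_imp_bounded compact_continuous_image) auto
  then show ?thesis by (rule set_lebesgue_integral_eq_integral(1))
qed

lemma norm_le_integral_of_energy_inequality:
  fixes E E' :: "real \<Rightarrow> 'a::real_inner" and f :: "real \<Rightarrow> real"
  assumes "0 \<le> t"
    and E_deriv: "\<And>s. s \<in> {0..t} \<Longrightarrow> (E has_vector_derivative E' s) (at s within {0..t})"
    and E0: "E 0 = 0"
    and energy: "\<And>s. s \<in> {0..t} \<Longrightarrow> E s \<bullet> E' s \<le> C * (norm (E s))\<^sup>2 + norm (E s) * f s"
    and f_nonneg: "\<And>s. s \<in> {0..t} \<Longrightarrow> 0 \<le> f s"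
    and f_int: "f absolutely_integrable_on {0..t}"
  shows "norm (E t) \<le> integral {0..t} (\<lambda>s. exp (C * (t - s)) * f s)"
proof -
  define G where "G = integral {0..t} (\<lambda>s. exp (- C * s) * f s)"
  define K where "K = 1 + \<bar>C\<bar> * exp (\<bar>C\<bar> * t) * t"
  have K: "0 < K" using \<open>0 \<le> t\<close> by (simp add: K_def add_pos_nonneg)
  have exp_f_int: "(\<lambda>s. exp (- C * s) * f s) integrable_on {0..t}"
    by (intro continuous_mult_integrable_on f_int continuous_intros)
  have "exp (- C * t) * norm (E t) \<le> G"
  proof (rule field_le_epsilon)
    fix \<delta> :: real
    assume "0 < \<delta>"
    then have "0 < (\<delta> / K)\<^sup>2" using K by simp
    from regularized_energy_bound[OF \<open>0 \<le> t\<close> this E_deriv E0 energy f_nonneg exp_f_int]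
    have "exp (- C * t) * norm (E t) \<le> G + K * sqrt ((\<delta> / K)\<^sup>2)"
      unfolding G_def K_def .
    then show "exp (- C * t) * norm (E t) \<le> G + \<delta>"
      using K \<open>0 < \<delta>\<close> by simp
  qed
  then have "norm (E t) \<le> exp (C * t) * G"
    by (simp add: exp_minus field_simps)
  also have "\<dots> = integral {0..t} (\<lambda>s. exp (C * (t - s)) * f s)"
    by (simp add: G_def mult.assoc right_diff_distrib exp_diff exp_minus field_simps flip: integral_mult_right)
  finally show ?thesis .
qed

section \<open>Integral bounds\<close>

lemma sq_le_mult_of_young:
  fixes N K F :: real
  assumes "0 \<le> K" and "0 \<le> F" and young: "\<And>l. 0 < l \<Longrightarrow> 2 * l * \<bar>N\<bar> \<le> l\<^sup>2 * K + F"
  shows "N\<^sup>2 \<le> K * F"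
proof (cases "N = 0")
  case False
  then have N: "0 < \<bar>N\<bar>" by simp
  show ?thesis
  proof (cases "K = 0")
    case True
    have "0 < F / \<bar>N\<bar> + 1" using N assms(2) by (simp add: add_nonneg_pos)
    moreover have "2 * (F / \<bar>N\<bar> + 1) * \<bar>N\<bar> = 2 * F + 2 * \<bar>N\<bar>"
      using N by (simp add: field_simps)
    ultimately show ?thesis using young N assms(2) True by fastforce
  next
    case False
    then have K: "0 < K" using assms(1) by simp
    have "2 * (\<bar>N\<bar> / K) * \<bar>N\<bar> \<le> (\<bar>N\<bar> / K)\<^sup>2 * K + F"
      using young[of "\<bar>N\<bar> / K"] N K by simp
    then have "N\<^sup>2 / K \<le> F"
      using K by (simp add: power2_eq_square field_simps)
    then show ?thesis using K by (simp add: divide_le_eq mult.commute)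
  qed
qed (simp add: assms mult_nonneg_nonneg)

lemma integral_mult_square_le:
  fixes f g :: "'a::euclidean_space \<Rightarrow> real"
  assumes fg: "(\<lambda>x. f x * g x) integrable_on S"
    and f2: "(\<lambda>x. (f x)\<^sup>2) integrable_on S" and g2: "(\<lambda>x. (g x)\<^sup>2) integrable_on S"
  shows "(integral S (\<lambda>x. f x * g x))\<^sup>2 \<le> integral S (\<lambda>x. (f x)\<^sup>2) * integral S (\<lambda>x. (g x)\<^sup>2)"
proof (rule sq_le_mult_of_young)
  show "0 \<le> integral S (\<lambda>x. (f x)\<^sup>2)" "0 \<le> integral S (\<lambda>x. (g x)\<^sup>2)"
    by (simp_all add: integral_nonneg f2 g2)
  fix l :: real
  assume "0 < l"
  have sum_int: "(\<lambda>x. l\<^sup>2 * (f x)\<^sup>2 + (g x)\<^sup>2) integrable_on S"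
    by (intro integrable_add integrable_on_mult_right f2 g2)
  have "2 * l * (\<sigma> * (f x * g x)) \<le> l\<^sup>2 * (f x)\<^sup>2 + (g x)\<^sup>2" if "\<bar>\<sigma>\<bar> = 1" for \<sigma> x
  proof -
    have "0 \<le> (l * f x - \<sigma> * g x)\<^sup>2" by simp
    then show ?thesis using that by (simp add: power2_eq_square algebra_simps abs_if split: if_splits)
  qed
  then have "2 * l * (\<sigma> * integral S (\<lambda>x. f x * g x)) \<le> l\<^sup>2 * integral S (\<lambda>x. (f x)\<^sup>2) + integral S (\<lambda>x. (g x)\<^sup>2)"
    if "\<bar>\<sigma>\<bar> = 1" for \<sigma>
    using integral_le[OF integrable_on_mult_right[OF integrable_on_mult_right[OF fg]] sum_int, of "2 * l" \<sigma>] that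
    by (simp add: integral_add integrable_on_mult_right f2 g2 mult.assoc)
  from this[of 1] this[of "-1"]
  show "2 * l * \<bar>integral S (\<lambda>x. f x * g x)\<bar> \<le> l\<^sup>2 * integral S (\<lambda>x. (f x)\<^sup>2) + integral S (\<lambda>x. (g x)\<^sup>2)"
    by (simp add: abs_if)
qed

lemma integral_reflect_interval:
  fixes g :: "real \<Rightarrow> real"
  assumes "g integrable_on {0..t}"
  shows "integral {0..t} (\<lambda>s. g (t - s)) = integral {0..t} g"
proof -
  have "(g has_integral integral {0..t} g) (cbox 0 t)"
    using assms by auto
  from has_integral_affinity[OF this, of "-1" t]
  have "((\<lambda>s. g (t - s)) has_integral integral {0..t} g) ((\<lambda>x. t - x) ` {0..t})"
    by (simp add: algebra_simps)
  moreover have "(\<lambda>x. t - x) ` {0..t} = {0..t}"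
    by (auto simp: image_iff intro!: bexI[where x = "t - _"])
  ultimately show ?thesis by (simp add: integral_unique)
qed

lemma integral_exp_diff_mono:
  fixes a t T :: real
  assumes "0 \<le> t" and "t \<le> T"
  shows "integral {0..t} (\<lambda>s. exp (a * (t - s))) \<le> integral {0..T} (\<lambda>s. exp (a * (T - s)))"
proof -
  have int: "(\<lambda>s. exp (a * s)) integrable_on {0..u}" for u
    by (intro integrable_continuous_real continuous_intros)
  have "integral {0..t} (\<lambda>s. exp (a * s)) \<le> integral {0..T} (\<lambda>s. exp (a * s))"
    using assms by (intro integral_subset_le int) auto
  then show ?thesis
    using integral_reflect_interval[OF int[of t]] integral_reflect_interval[OF int[of T]] by simp
qed

lemma square_integrable_imp_measurable:
  fixes f :: "'a::euclidean_space \<Rightarrow> real"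
  assumes "(\<lambda>x. (f x)\<^sup>2) integrable_on S" and "\<And>x. x \<in> S \<Longrightarrow> 0 \<le> f x"
  shows "f \<in> borel_measurable (lebesgue_on S)"
proof -
  have "(\<lambda>x. sqrt ((f x)\<^sup>2)) \<in> borel_measurable (lebesgue_on S)"
    using integrable_imp_measurable[OF assms(1)] by measurable
  then show ?thesis
    by (rule measurable_cong[THEN iffD1, rotated]) (simp add: assms(2))
qed

lemma square_integrable_imp_absolutely_integrable:
  fixes f :: "real \<Rightarrow> real"
  assumes "f \<in> borel_measurable (lebesgue_on {a..b})" and "(\<lambda>x. (f x)\<^sup>2) integrable_on {a..b}"
  shows "f absolutely_integrable_on {a..b}"
proof (rule measurable_bounded_by_integrable_imp_absolutely_integrable[OF assms(1)])
  show "(\<lambda>x. 1 + (f x)\<^sup>2) integrable_on {a..b}"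
    using assms(2) by (rule integrable_add[OF integrable_const_ivl])
  show "norm (f x) \<le> 1 + (f x)\<^sup>2" for x
    using sum_power2_ge_zero[of "\<bar>f x\<bar> - 1" 0] by (simp add: power2_eq_square algebra_simps)
qed simp

lemma continuous_on_square_integrable:
  fixes g :: "real \<Rightarrow> real"
  assumes "continuous_on {a..b} g"
  shows "g \<in> borel_measurable (lebesgue_on {a..b})" and "(\<lambda>t. (g t)\<^sup>2) integrable_on {a..b}"
  using assms by (auto intro!: continuous_imp_measurable_on_sets_lebesgue integrable_continuous_real
      continuous_on_power)

lemma norm_sq_le_of_energy_inequality:
  fixes E E' :: "real \<Rightarrow> 'a::real_inner" and f :: "real \<Rightarrow> real"
  assumes E_deriv: "\<And>s. s \<in> {0..T} \<Longrightarrow> (E has_vector_derivative E' s) (at s within {0..T})"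
    and E0: "E 0 = 0"
    and energy: "\<And>s. s \<in> {0..T} \<Longrightarrow> E s \<bullet> E' s \<le> C * (norm (E s))\<^sup>2 + norm (E s) * f s"
    and f_nonneg: "\<And>s. s \<in> {0..T} \<Longrightarrow> 0 \<le> f s"
    and f_meas: "f \<in> borel_measurable (lebesgue_on {0..T})"
    and f_sq: "(\<lambda>s. (f s)\<^sup>2) integrable_on {0..T}"
    and t: "t \<in> {0..T}"
  shows "(norm (E t))\<^sup>2 \<le> integral {0..T} (\<lambda>s. exp (2 * C * (T - s))) * integral {0..T} (\<lambda>s. (f s)\<^sup>2)"
proof -
  have sub: "{0..t} \<subseteq> {0..T}" using t by auto
  have f_int: "f absolutely_integrable_on {0..t}"
    using square_integrable_imp_absolutely_integrable[OF f_meas f_sq] sub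
    by (rule absolutely_integrable_on_subinterval)
  have "norm (E t) \<le> integral {0..t} (\<lambda>s. exp (C * (t - s)) * f s)"
    using t sub
    by (intro norm_le_integral_of_energy_inequality f_int)
       (auto intro: E0 energy f_nonneg has_vector_derivative_within_subset[OF E_deriv])
  then have "(norm (E t))\<^sup>2 \<le> (integral {0..t} (\<lambda>s. exp (C * (t - s)) * f s))\<^sup>2"
    by (simp add: power_mono)
  also have "\<dots> \<le> integral {0..t} (\<lambda>s. (exp (C * (t - s)))\<^sup>2) * integral {0..t} (\<lambda>s. (f s)\<^sup>2)"
    by (intro integral_mult_square_le continuous_mult_integrable_on f_int
        integrable_continuous_real continuous_intros integrable_on_subinterval[OF f_sq sub])
  also have "\<dots> \<le> integral {0..T} (\<lambda>s. exp (2 * C * (T - s))) * integral {0..T} (\<lambda>s. (f s)\<^sup>2)"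
  proof (intro mult_mono)
    show "integral {0..t} (\<lambda>s. (exp (C * (t - s)))\<^sup>2) \<le> integral {0..T} (\<lambda>s. exp (2 * C * (T - s)))"
      using integral_exp_diff_mono[of t T "2 * C"] t by (simp add: exp_double[symmetric] mult.assoc)
    show "integral {0..t} (\<lambda>s. (f s)\<^sup>2) \<le> integral {0..T} (\<lambda>s. (f s)\<^sup>2)"
      by (rule integral_subset_le[OF sub integrable_on_subinterval[OF f_sq sub] f_sq]) simp
    show "0 \<le> integral {0..T} (\<lambda>s. exp (2 * C * (T - s)))"
      by (intro integral_nonneg integrable_continuous_real continuous_intros) simp
    show "0 \<le> integral {0..t} (\<lambda>s. (f s)\<^sup>2)"
      by (rule integral_nonneg[OF integrable_on_subinterval[OF f_sq sub]]) simp
  qed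
  finally show ?thesis .
qed

lemma integral_norm_sq_le_of_energy_inequality:
  fixes E E' :: "real \<Rightarrow> 'a::real_inner" and f :: "real \<Rightarrow> real"
  assumes "0 \<le> T"
    and E_deriv: "\<And>s. s \<in> {0..T} \<Longrightarrow> (E has_vector_derivative E' s) (at s within {0..T})"
    and E0: "E 0 = 0"
    and energy: "\<And>s. s \<in> {0..T} \<Longrightarrow> E s \<bullet> E' s \<le> C * (norm (E s))\<^sup>2 + norm (E s) * f s"
    and f_nonneg: "\<And>s. s \<in> {0..T} \<Longrightarrow> 0 \<le> f s"
    and f_meas: "f \<in> borel_measurable (lebesgue_on {0..T})"
    and f_sq: "(\<lambda>s. (f s)\<^sup>2) integrable_on {0..T}"
  shows "integral {0..T} (\<lambda>t. (norm (E t))\<^sup>2)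
    \<le> T * integral {0..T} (\<lambda>s. exp (2 * C * (T - s))) * integral {0..T} (\<lambda>s. (f s)\<^sup>2)"
proof -
  have "continuous_on {0..T} E"
    using E_deriv has_vector_derivative_continuous continuous_on_eq_continuous_within by blast
  then have "(\<lambda>t. (norm (E t))\<^sup>2) integrable_on {0..T}"
    by (intro integrable_continuous_real continuous_intros)
  then have "integral {0..T} (\<lambda>t. (norm (E t))\<^sup>2)
      \<le> integral {0..T} (\<lambda>t. integral {0..T} (\<lambda>s. exp (2 * C * (T - s))) * integral {0..T} (\<lambda>s. (f s)\<^sup>2))"
    by (rule integral_le[OF _ integrable_const_ivl])
       (rule norm_sq_le_of_energy_inequality[OF E_deriv E0 energy f_nonneg f_meas f_sq])
  then show ?thesis using \<open>0 \<le> T\<close> by (simp add: mult_ac)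
qed

lemma integral_square_sum4_le:
  fixes f1 f2 f3 f4 :: "'a::euclidean_space \<Rightarrow> real"
  assumes "S \<in> sets lebesgue"
    and "\<forall>g \<in> {f1, f2, f3, f4}. g \<in> borel_measurable (lebesgue_on S) \<and> (\<lambda>x. (g x)\<^sup>2) integrable_on S"
  shows "(\<lambda>x. (f1 x + f2 x + f3 x + f4 x)\<^sup>2) integrable_on S"
    and "integral S (\<lambda>x. (f1 x + f2 x + f3 x + f4 x)\<^sup>2)
      \<le> 4 * (integral S (\<lambda>x. (f1 x)\<^sup>2) + integral S (\<lambda>x. (f2 x)\<^sup>2)
             + integral S (\<lambda>x. (f3 x)\<^sup>2) + integral S (\<lambda>x. (f4 x)\<^sup>2))"
proof -
  have bound: "(p + q + r + s)\<^sup>2 \<le> 4 * (p\<^sup>2 + q\<^sup>2 + r\<^sup>2 + s\<^sup>2)" for p q r s :: real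
    using Cauchy_Schwarz_ineq_sum[of "\<lambda>_. 1" "\<lambda>i. [p, q, r, s] ! i" "{..<4}"]
    by (simp add: numeral_eq_Suc lessThan_Suc_eq_insert_0 algebra_simps)
  have sq_int: "(\<lambda>x. 4 * ((f1 x)\<^sup>2 + (f2 x)\<^sup>2 + (f3 x)\<^sup>2 + (f4 x)\<^sup>2)) integrable_on S"
    using assms(2) by (intro integrable_on_mult_right integrable_add) auto
  show int: "(\<lambda>x. (f1 x + f2 x + f3 x + f4 x)\<^sup>2) integrable_on S"
    by (rule measurable_bounded_by_integrable_imp_integrable[OF _ sq_int _ assms(1)])
       (use assms(2) bound in auto)
  show "integral S (\<lambda>x. (f1 x + f2 x + f3 x + f4 x)\<^sup>2)
      \<le> 4 * (integral S (\<lambda>x. (f1 x)\<^sup>2) + integral S (\<lambda>x. (f2 x)\<^sup>2)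
             + integral S (\<lambda>x. (f3 x)\<^sup>2) + integral S (\<lambda>x. (f4 x)\<^sup>2))"
  proof -
    have "integral S (\<lambda>x. (f1 x)\<^sup>2 + (f2 x)\<^sup>2 + (f3 x)\<^sup>2 + (f4 x)\<^sup>2)
        = integral S (\<lambda>x. (f1 x)\<^sup>2) + integral S (\<lambda>x. (f2 x)\<^sup>2)
          + integral S (\<lambda>x. (f3 x)\<^sup>2) + integral S (\<lambda>x. (f4 x)\<^sup>2)"
      using assms(2) by (simp add: integral_add integrable_add)
    then show ?thesis
      using integral_le[OF int sq_int bound] by (simp only: integral_mult_right)
  qed
qed

lemma integral_square_nonneg:
  fixes f :: "'a::euclidean_space \<Rightarrow> real"
  shows "0 \<le> integral S (\<lambda>x. (f x)\<^sup>2)"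
  by (cases "(\<lambda>x. (f x)\<^sup>2) integrable_on S") (simp_all add: integral_nonneg not_integrable_integral)

lemma add_mult_sum_le_Max:
  fixes W A B V k p q :: real
  assumes "0 \<le> W" "0 \<le> A" "0 \<le> B" "0 \<le> V"
  shows "W + k * (A + B + p * W + q * V) \<le> Max {1 + p * k, q * k, k} * (W + A + B + V)"
proof -
  have "W + k * (A + B + p * W + q * V) = (1 + p * k) * W + k * A + k * B + (q * k) * V"
    by (simp add: algebra_simps)
  also have "\<dots> \<le> Max {1 + p * k, q * k, k} * W + Max {1 + p * k, q * k, k} * A
      + Max {1 + p * k, q * k, k} * B + Max {1 + p * k, q * k, k} * V"
    using assms by (intro add_mono mult_right_mono) auto
  finally show ?thesis by (simp add: algebra_simps)
qed

lemma integral_norm_sq_le_of_split_energy_inequality: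
  fixes e e' :: "real \<Rightarrow> 'a::real_inner" and a b w v :: "real \<Rightarrow> real"
  assumes "0 \<le> T"
    and e_deriv: "\<And>s. s \<in> {0..T} \<Longrightarrow> (e has_vector_derivative e' s) (at s within {0..T})"
    and e0: "e 0 = 0"
    and energy: "\<And>s. s \<in> {0..T} \<Longrightarrow>
      e s \<bullet> e' s \<le> C1 * (norm (e s))\<^sup>2 + norm (e s) * (a s + b s + C2 * w s + C3 * v s)"
    and "0 \<le> C2" and "0 \<le> C3"
    and nonneg: "\<And>s. 0 \<le> a s" "\<And>s. 0 \<le> b s" "\<And>s. 0 \<le> w s" "\<And>s. 0 \<le> v s"
    and a_sq: "(\<lambda>t. (a t)\<^sup>2) integrable_on {0..T}" and b_sq: "(\<lambda>t. (b t)\<^sup>2) integrable_on {0..T}"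
    and w_cont: "continuous_on {0..T} w" and v_cont: "continuous_on {0..T} v"
  defines "I g \<equiv> integral {0..T} (\<lambda>t. (g t)\<^sup>2)"
    and "\<alpha> \<equiv> 4 * integral {0..T} (\<lambda>\<tau>. exp (2 * C1 * (T - \<tau>)))"
  shows "integral {0..T} (\<lambda>t. (norm (e t))\<^sup>2) \<le> T * \<alpha> * (I a + I b + C2\<^sup>2 * I w + C3\<^sup>2 * I v)"
proof -
  define f where "f t = a t + b t + C2 * w t + C3 * v t" for t
  note w_sq = continuous_on_square_integrable[OF continuous_on_mult_left[OF w_cont]]
  note v_sq = continuous_on_square_integrable[OF continuous_on_mult_left[OF v_cont]]
  have square_integrable: "\<forall>g \<in> {a, b, \<lambda>t. C2 * w t, \<lambda>t. C3 * v t}.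
      g \<in> borel_measurable (lebesgue_on {0..T}) \<and> (\<lambda>t. (g t)\<^sup>2) integrable_on {0..T}"
    using a_sq b_sq square_integrable_imp_measurable[OF a_sq] square_integrable_imp_measurable[OF b_sq]
      w_sq v_sq nonneg by auto
  have f_sq: "(\<lambda>t. (f t)\<^sup>2) integrable_on {0..T}"
    and f_sq_le: "I f \<le> 4 * (I a + I b + C2\<^sup>2 * I w + C3\<^sup>2 * I v)"
    using integral_square_sum4_le[OF _ square_integrable]
    by (simp_all add: f_def I_def power_mult_distrib)
  have f_meas: "f \<in> borel_measurable (lebesgue_on {0..T})"
    using square_integrable unfolding f_def[abs_def] by (intro borel_measurable_add) auto
  have "0 \<le> T * integral {0..T} (\<lambda>\<tau>. exp (2 * C1 * (T - \<tau>)))"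
    using \<open>0 \<le> T\<close> by (intro mult_nonneg_nonneg integral_nonneg integrable_continuous_real continuous_intros) auto
  have "integral {0..T} (\<lambda>t. (norm (e t))\<^sup>2) \<le> T * integral {0..T} (\<lambda>\<tau>. exp (2 * C1 * (T - \<tau>))) * I f"
    unfolding I_def
    by (rule integral_norm_sq_le_of_energy_inequality[OF \<open>0 \<le> T\<close> e_deriv e0 energy[folded f_def] _ f_meas f_sq])
       (use nonneg \<open>0 \<le> C2\<close> \<open>0 \<le> C3\<close> in \<open>simp_all add: f_def\<close>)
  also have "\<dots> \<le> T * \<alpha> * (I a + I b + C2\<^sup>2 * I w + C3\<^sup>2 * I v)"
    using mult_left_mono[OF f_sq_le \<open>0 \<le> T * _\<close>] by (simp add: \<alpha>_def algebra_simps)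
  finally show ?thesis .
qed

lemma error_bound_of_energy_inequality:
  fixes e e' :: "real \<Rightarrow> 'a::real_inner" and a b w v :: "real \<Rightarrow> real"
  assumes "0 \<le> T"
    and e_deriv: "\<And>s. s \<in> {0..T} \<Longrightarrow> (e has_vector_derivative e' s) (at s within {0..T})"
    and e0: "e 0 = 0"
    and energy: "\<And>s. s \<in> {0..T} \<Longrightarrow>
      e s \<bullet> e' s \<le> C1 * (norm (e s))\<^sup>2 + norm (e s) * (a s + b s + C2 * w s + C3 * v s)"
    and "0 \<le> C2" and "0 \<le> C3"
    and nonneg: "\<And>s. 0 \<le> a s" "\<And>s. 0 \<le> b s" "\<And>s. 0 \<le> w s" "\<And>s. 0 \<le> v s"
    and a_sq: "(\<lambda>t. (a t)\<^sup>2) integrable_on {0..T}" and b_sq: "(\<lambda>t. (b t)\<^sup>2) integrable_on {0..T}"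
    and w_cont: "continuous_on {0..T} w" and v_cont: "continuous_on {0..T} v"
  defines "I g \<equiv> integral {0..T} (\<lambda>t. (g t)\<^sup>2)"
    and "\<alpha> \<equiv> 4 * integral {0..T} (\<lambda>\<tau>. exp (2 * C1 * (T - \<tau>)))"
  shows "integral {0..T} (\<lambda>t. (w t)\<^sup>2 + (norm (e t))\<^sup>2)
    \<le> Max {1 + C2\<^sup>2 * T * \<alpha>, C3\<^sup>2 * T * \<alpha>, T * \<alpha>} * (I w + I a + I b + I v)"
proof -
  have "continuous_on {0..T} e"
    using e_deriv has_vector_derivative_continuous continuous_on_eq_continuous_within by blast
  then have "integral {0..T} (\<lambda>t. (w t)\<^sup>2 + (norm (e t))\<^sup>2) = I w + integral {0..T} (\<lambda>t. (norm (e t))\<^sup>2)"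
    unfolding I_def using w_cont by (intro integral_add integrable_continuous_real continuous_intros) auto
  also have "\<dots> \<le> I w + T * \<alpha> * (I a + I b + C2\<^sup>2 * I w + C3\<^sup>2 * I v)"
    using integral_norm_sq_le_of_split_energy_inequality[OF assms(1-14)] by (simp add: I_def \<alpha>_def)
  also have "\<dots> \<le> Max {1 + C2\<^sup>2 * T * \<alpha>, C3\<^sup>2 * T * \<alpha>, T * \<alpha>} * (I w + I a + I b + I v)"
    using add_mult_sum_le_Max[of "I w" "I a" "I b" "I v" "T * \<alpha>" "C2\<^sup>2" "C3\<^sup>2"]
    by (simp add: I_def integral_square_nonneg mult.assoc)
  finally show ?thesis .
qed

theorem theorem1:
  fixes T :: real
    and J R Q :: "real^'n^'n"
    and B :: "real^'m^'n"
    and u :: "real \<Rightarrow> real^'m"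
    and c :: "real^'d"
    and h :: "real^'n \<Rightarrow> real^'d"
    and Jh :: "real^'n \<Rightarrow> real^'n^'d"
    and x x' :: "real \<Rightarrow> real^'n"
    and x0 :: "real^'n"
    and Phi :: "real^'r^'n"
    and Jr Rr :: "real^'r^'r"
    and Br :: "real^'m^'r"
    and Psi :: "real^'p^'d"
    and wp :: "'p \<Rightarrow> 'd"
    and xr :: "real \<Rightarrow> real^'r"
    and Dt :: "real \<Rightarrow> real^'n"
  assumes T_pos: "T > 0"
    and J_skew: "transpose J = - J"
    and R_sym: "transpose R = R"
    and R_psd: "\<forall>v. v \<bullet> (R *v v) \<ge> 0"
    and Q_sym: "transpose Q = Q"
    and h_deriv: "\<forall>z. (h has_derivative (\<lambda>v. Jh z *v v)) (at z)"
    and Jh_cont: "continuous_on UNIV Jh"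
    and x_deriv: "\<forall>t\<in>{0..T}. (x has_vector_derivative x' t) (at t within {0..T})"
    and x_ode: "\<forall>t\<in>{0..T}. x' t = (J - R) *v gradH Q c Jh (x t) + B *v u t"
    and x_init: "x 0 = x0"
    and Phi_orth: "transpose Phi ** Phi = mat 1"
    and Psi_orth: "transpose Psi ** Psi = mat 1"
    and wp_inj: "inj wp"
    and PPsi_inv: "invertible (transpose (selmat wp) ** Psi)"
    and xr_deriv: "\<forall>t\<in>{0..T}. (xr has_vector_derivative
          ((Jr - Rr) *v gradHr Q c Jh Phi (deim_proj Psi wp) (xr t) + Br *v u t))
          (at t within {0..T})"
    and xr_init: "xr 0 = transpose Phi *v x0"
    and gradH_lip: "\<exists>L. L-lipschitz_on UNIV (gradH Q c Jh)"
    and Jh_lip: "\<exists>L. L-lipschitz_on UNIV Jh"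
    and int_Dt: "(\<lambda>t. norm (x' t - Dt t)^2) integrable_on {0..T}"
    and int_res: "(\<lambda>t. norm (transpose Phi *v Dt t
                     - (Jr - Rr) *v (transpose Phi *v gradH Q c Jh (x t)) - Br *v u t)^2)
                  integrable_on {0..T}"
  shows
    "let Dr = Jr - Rr;
         PP = deim_proj Psi wp;
         C1 = lognorm (Phi ** Dr ** transpose Phi ** Q)
              + opnorm (Dr ** transpose Phi) * lipconst_op Jh
                * opnorm (matrix_inv (transpose (selmat wp) ** Psi)) * norm c;
         C2 = opnorm (Dr ** transpose Phi) * lipconst (gradH Q c Jh);
         C3 = opnorm Dr * norm c;
         \<alpha> = 4 * integral {0..T} (\<lambda>\<tau>. exp (2 * C1 * (T - \<tau>)));
         CT = Max {1 + C2^2 * T * \<alpha>, C3^2 * T * \<alpha>, T * \<alpha>}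
     in integral {0..T} (\<lambda>t. norm (x t - Phi *v xr t)^2)
        \<le> CT * ( integral {0..T} (\<lambda>t. norm (x t - Phi *v (transpose Phi *v x t))^2)
               + integral {0..T} (\<lambda>t. norm (x' t - Dt t)^2)
               + integral {0..T} (\<lambda>t. norm (transpose Phi *v Dt t
                     - Dr *v (transpose Phi *v gradH Q c Jh (x t)) - Br *v u t)^2)
               + integral {0..T} (\<lambda>t. opnorm ((mat 1 - PP) ** Jh (Phi *v (transpose Phi *v x t)) ** Phi)^2))"
proof -
  define Dr PP where "Dr = Jr - Rr" and "PP = deim_proj Psi wp"
  define C1 where "C1 = lognorm (Phi ** Dr ** transpose Phi ** Q)
    + opnorm (Dr ** transpose Phi) * lipconst_op Jh * opnorm (matrix_inv (transpose (selmat wp) ** Psi)) * norm c"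
  define C2 C3 where "C2 = opnorm (Dr ** transpose Phi) * lipconst (gradH Q c Jh)" and "C3 = opnorm Dr * norm c"
  define z where "z t = Phi *v (transpose Phi *v x t)" for t
  define a b w v where "a t = norm (x' t - Dt t)"
    and "b t = norm (transpose Phi *v Dt t - Dr *v (transpose Phi *v gradH Q c Jh (x t)) - Br *v u t)"
    and "w t = norm (x t - z t)" and "v t = opnorm ((mat 1 - PP) ** Jh (z t) ** Phi)" for t
  define e where "e t = transpose Phi *v x t - xr t" for t
  obtain Lg LJ where Lg: "Lg-lipschitz_on UNIV (gradH Q c Jh)" and LJ: "LJ-lipschitz_on UNIV Jh"
    using gradH_lip Jh_lip by blast
  have energy: "e s \<bullet> (transpose Phi *v x' s - (Dr *v gradHr Q c Jh Phi PP (xr s) + Br *v u s))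
      \<le> C1 * (norm (e s))\<^sup>2 + norm (e s) * (a s + b s + C2 * w s + C3 * v s)" for s
    unfolding C1_def C2_def C3_def a_def b_def w_def v_def z_def e_def PP_def
    by (rule reduced_energy_inequality[OF Phi_orth lipconst(1)[OF Lg] lipconst_op(1)[OF LJ]
          norm_deim_proj_transpose_le[OF wp_inj Psi_orth]])
  have e_deriv: "(e has_vector_derivative
      transpose Phi *v x' s - (Dr *v gradHr Q c Jh Phi PP (xr s) + Br *v u s)) (at s within {0..T})"
    if "s \<in> {0..T}" for s
    unfolding e_def Dr_def PP_def using x_deriv xr_deriv that
    by (auto intro!: has_vector_derivative_diff
        bounded_linear.has_vector_derivative[OF matrix_vector_mul_bounded_linear])
  have x_cont: "continuous_on {0..T} x"
    using x_deriv has_vector_derivative_continuous continuous_on_eq_continuous_within by blast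
  then have z_cont: "continuous_on {0..T} z"
    unfolding z_def by (intro linear_continuous_on_compose[OF _ matrix_vector_mul_linear])
  have v_cont: "continuous_on {0..T} v"
    unfolding v_def by (intro continuous_on_opnorm_sandwich continuous_on_compose2[OF Jh_cont z_cont]) auto
  have w_cont: "continuous_on {0..T} w"
    unfolding w_def by (intro continuous_intros x_cont z_cont)
  have a_sq: "(\<lambda>t. (a t)\<^sup>2) integrable_on {0..T}" and b_sq: "(\<lambda>t. (b t)\<^sup>2) integrable_on {0..T}"
    using int_Dt int_res by (simp_all add: a_def b_def Dr_def)
  have "0 \<le> C2" "0 \<le> C3"
    using lipconst(2)[OF Lg] by (simp_all add: C2_def C3_def opnorm_nonneg)
  have e0: "e 0 = 0"
    by (simp add: e_def x_init xr_init)
  define \<alpha> where "\<alpha> = 4 * integral {0..T} (\<lambda>\<tau>. exp (2 * C1 * (T - \<tau>)))"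
  have "(\<lambda>t. (norm (x t - Phi *v xr t))\<^sup>2) = (\<lambda>t. (w t)\<^sup>2 + (norm (e t))\<^sup>2)"
    unfolding w_def z_def e_def by (intro ext orthonormal_norm_diff_square[OF Phi_orth])
  moreover have "integral {0..T} (\<lambda>t. (w t)\<^sup>2 + (norm (e t))\<^sup>2)
    \<le> Max {1 + C2\<^sup>2 * T * \<alpha>, C3\<^sup>2 * T * \<alpha>, T * \<alpha>}
      * (integral {0..T} (\<lambda>t. (w t)\<^sup>2) + integral {0..T} (\<lambda>t. (a t)\<^sup>2)
         + integral {0..T} (\<lambda>t. (b t)\<^sup>2) + integral {0..T} (\<lambda>t. (v t)\<^sup>2))"
    unfolding \<alpha>_def
    by (rule error_bound_of_energy_inequality[OF _ e_deriv e0 energy \<open>0 \<le> C2\<close> \<open>0 \<le> C3\<close> _ _ _ _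
          a_sq b_sq w_cont v_cont])
       (use T_pos in \<open>simp_all add: a_def b_def w_def v_def opnorm_nonneg\<close>)
  ultimately show ?thesis
    unfolding Let_def \<alpha>_def a_def b_def w_def v_def z_def C1_def C2_def C3_def Dr_def PP_def by simp
qed

end
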